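(* Let $G$ be a simple graph of order $n$ and $m\ge 3$. Let $\alpha'(G)$ be the size of a maximum matching $M$ of $G$ and $l=n-2\alpha'(G)$ the number of $M$-unsaturated vertices of $G$. Then $s(G\circ C_m)=n\,s(C_m)+\alpha'(G)+l$ if $m\equiv 0\pmod 3$, and $s(G\circ C_m)=n\,s(C_m)$ otherwise.
   Context: A matching in a graph is a set of edges no two of which share a vertex; it is maximal if it is not properly contained in another matching, and maximum if it has the largest possible size. A vertex is $M$-unsaturated if no edge of $M$ is incident to it. The saturation number $s(G)$ is the minimum cardinality of a maximal matching of $G$. $C_m$ is the cycle on $m$ vertices; $s(C_m)=\lceil m/3\rceil$. The corona $G_1\circ G_2$ is obtained by taking one copy of $G_1$ and $|V(G_1)|$ disjoint copies of $G_2$, and joining the $i$-th vertex of $G_1$ by an edge to every vertex of the $i$-th copy of $G_2$. *)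

theory Defs
  imports Main
begin

definition simple_graph :: "'a set \<Rightarrow> 'a set set \<Rightarrow> bool" where
  "simple_graph V E \<longleftrightarrow> finite V \<and> (\<forall>e\<in>E. e \<subseteq> V \<and> card e = 2)"

definition matching :: "'a set set \<Rightarrow> 'a set set \<Rightarrow> bool" where
  "matching E M \<longleftrightarrow> M \<subseteq> E \<and> (\<forall>e1\<in>M. \<forall>e2\<in>M. e1 \<noteq> e2 \<longrightarrow> e1 \<inter> e2 = {})"

definition maximal_matching :: "'a set set \<Rightarrow> 'a set set \<Rightarrow> bool" where
  "maximal_matching E M \<longleftrightarrow> matching E M \<and> (\<forall>M'. matching E M' \<longrightarrow> M \<subseteq> M' \<longrightarrow> M' = M)"

definition matching_number :: "'a set set \<Rightarrow> nat" where
  "matching_number E = Max (card ` {M. matching E M})"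

definition saturation_number :: "'a set set \<Rightarrow> nat" where
  "saturation_number E = Min (card ` {M. maximal_matching E M})"

definition cycle_vertices :: "nat \<Rightarrow> nat set" where
  "cycle_vertices m = {0..<m}"

definition cycle_edges :: "nat \<Rightarrow> nat set set" where
  "cycle_edges m = {{i, (i + 1) mod m} | i. i < m}"

text \<open>Corona G1 o G2: vertex Inl v for v in V1, vertex Inr (v, w) is the copy of w in the v-th copy of G2.\<close>
definition corona_vertices :: "'a set \<Rightarrow> 'b set \<Rightarrow> ('a + 'a \<times> 'b) set" where
  "corona_vertices V1 V2 = Inl ` V1 \<union> {Inr (v, w) | v w. v \<in> V1 \<and> w \<in> V2}"

definition corona_edges :: "'a set \<Rightarrow> 'a set set \<Rightarrow> 'b set \<Rightarrow> 'b set set \<Rightarrow> ('a + 'a \<times> 'b) set set" where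
  "corona_edges V1 E1 V2 E2 =
     (\<lambda>e. Inl ` e) ` E1
     \<union> {(\<lambda>w. Inr (v, w)) ` e | v e. v \<in> V1 \<and> e \<in> E2}
     \<union> {{Inl v, Inr (v, w)} | v w. v \<in> V1 \<and> w \<in> V2}"

end

theory Submission
  imports Defs "HOL-Library.Disjoint_Sets"
begin

text \<open>
  In the copy at v, the copy edges N_v of M together with the at most one spoke of M at v
  dominate the cycle; charging every uncovered cycle vertex to its successor gives
  m \<le> 3|N_v| + 2|S_v|, so each copy costs at least \<lceil>m/3\<rceil>. If 3 divides m and v is
  not saturated by the G-edges of M, the copy costs one more: without a spoke the copy edges must
  cover all m vertices, and with a spoke still m/3 copy edges are needed. Hence
  |M| \<ge> n m/3 + n - |M \<inter> E(G)| \<ge> n m/3 + n - \<alpha>'(G).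
  Both bounds are attained by taking a maximum matching of G and minimum maximal matchings of
  the copies at saturated vertices, and at every other vertex a spoke to vertex 0 plus
  \<lfloor>m/3\<rfloor> edges dominating the path C_m - 0; for m not divisible by 3 all vertices
  are treated the second way, since \<lfloor>m/3\<rfloor> + 1 = \<lceil>m/3\<rceil>.
\<close>

section \<open>Matchings\<close>

lemma matching_iff_disjoint: "matching E M \<longleftrightarrow> M \<subseteq> E \<and> disjoint M"
  unfolding matching_def disjoint_def by blast

lemma matching_disjointD:
  "matching E M \<Longrightarrow> f \<in> M \<Longrightarrow> g \<in> M \<Longrightarrow> f \<noteq> g \<Longrightarrow> f \<inter> g = {}"
  unfolding matching_def by blast

lemma matching_insert:
  assumes "matching E M" "e \<in> E" "e \<inter> \<Union>M = {}"
  shows "matching E (insert e M)"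
  using assms unfolding matching_def by blast

lemma maximal_matchingI:
  assumes "matching E M" and "\<And>e. e \<in> E \<Longrightarrow> \<exists>f\<in>M. e \<inter> f \<noteq> {}"
  shows "maximal_matching E M"
  unfolding maximal_matching_def
proof (intro conjI allI impI)
  fix M' assume M': "matching E M'" "M \<subseteq> M'"
  show "M' = M"
  proof (rule ccontr)
    assume "M' \<noteq> M"
    with M' obtain e where e: "e \<in> M'" "e \<notin> M" by blast
    with M' have "e \<in> E" unfolding matching_def by blast
    then obtain f where "f \<in> M" "e \<inter> f \<noteq> {}" using assms(2) by blast
    with e M' show False using matching_disjointD by blast
  qed
qed (fact assms(1))

lemma maximal_matching_meets:
  assumes "maximal_matching E M" "e \<in> E" "e \<noteq> {}"
  shows "\<exists>f\<in>M. e \<inter> f \<noteq> {}"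
proof (rule ccontr)
  assume none: "\<not> (\<exists>f\<in>M. e \<inter> f \<noteq> {})"
  with assms(1,2) have "matching E (insert e M)"
    unfolding maximal_matching_def matching_def by blast
  with assms(1) have "e \<in> M" unfolding maximal_matching_def by blast
  with none assms(3) show False by blast
qed

lemma finite_matchings: "finite E \<Longrightarrow> finite {M. matching E M}"
  by (rule finite_subset[of _ "Pow E"]) (auto simp: matching_def)

lemma card_le_matching_number:
  assumes "finite E" "matching E M"
  shows "card M \<le> matching_number E"
  unfolding matching_number_def using assms finite_matchings by (intro Max_ge) auto

lemma matching_number_attained:
  assumes "finite E"
  obtains M where "matching E M" "card M = matching_number E"
proof -
  have "matching E {}" by (simp add: matching_def)
  then have "matching_number E \<in> card ` {M. matching E M}"
    unfolding matching_number_def using assms finite_matchings by (intro Max_in) auto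
  then show thesis using that by auto
qed

lemma maximum_matching_is_maximal:
  assumes "finite E" "matching E M" "card M = matching_number E"
  shows "maximal_matching E M"
  unfolding maximal_matching_def
proof (intro conjI allI impI)
  fix M' assume M': "matching E M'" "M \<subseteq> M'"
  have "finite M'" using M' assms(1) finite_subset unfolding matching_def by blast
  moreover have "card M' \<le> card M" using card_le_matching_number[OF assms(1) M'(1)] assms(3) by simp
  ultimately show "M' = M" using M'(2) card_seteq by blast
qed (fact assms(2))

lemma saturation_number_le:
  assumes "finite E" "maximal_matching E M"
  shows "saturation_number E \<le> card M"
proof -
  have "{M. maximal_matching E M} \<subseteq> {M. matching E M}"
    unfolding maximal_matching_def by blast
  then have "finite (card ` {M. maximal_matching E M})"
    using finite_matchings[OF assms(1)] finite_subset by blast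
  with assms(2) show ?thesis unfolding saturation_number_def by simp
qed

lemma saturation_number_attained:
  assumes "finite E"
  obtains M where "maximal_matching E M" "card M = saturation_number E"
proof -
  obtain M0 where "matching E M0" "card M0 = matching_number E"
    using matching_number_attained[OF assms] .
  then have "maximal_matching E M0" using assms by (intro maximum_matching_is_maximal)
  moreover have "{M. maximal_matching E M} \<subseteq> {M. matching E M}"
    unfolding maximal_matching_def by blast
  ultimately have "saturation_number E \<in> card ` {M. maximal_matching E M}"
    unfolding saturation_number_def using finite_matchings[OF assms] finite_subset
    by (intro Min_in) auto
  then show thesis using that by auto
qed

lemma saturation_number_eqI:
  assumes "finite E" "maximal_matching E M" "card M \<le> b"
    and "\<And>M. maximal_matching E M \<Longrightarrow> b \<le> card M"
  shows "saturation_number E = b"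
proof -
  obtain M' where "maximal_matching E M'" "card M' = saturation_number E"
    using saturation_number_attained[OF assms(1)] .
  then show ?thesis using assms saturation_number_le[OF assms(1,2)] by force
qed

lemma card_Union_le_double:
  assumes "\<forall>e\<in>M. card e = 2"
  shows "card (\<Union>M) \<le> 2 * card M"
proof -
  have "card (\<Union>M) \<le> sum card M" by (rule card_Union_le_sum_card)
  also have "\<dots> = 2 * card M" using assms by simp
  finally show ?thesis .
qed

lemma card_Union_matching:
  assumes "matching E M" "\<forall>e\<in>E. card e = 2"
  shows "card (\<Union>M) = 2 * card M"
proof -
  have edges: "\<forall>e\<in>M. card e = 2" using assms unfolding matching_def by blast
  then have "\<forall>e\<in>M. finite e" by (metis card.infinite zero_neq_numeral)
  moreover have "disjoint M" using assms(1) matching_iff_disjoint by blast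
  ultimately have "card (\<Union>M) = sum card M" by (intro card_Union_disjoint) auto
  also have "\<dots> = 2 * card M" using edges by simp
  finally show ?thesis .
qed

lemma simple_graphD:
  assumes "simple_graph V E"
  shows "finite V" "finite E" "\<And>e. e \<in> E \<Longrightarrow> e \<subseteq> V" "\<And>e. e \<in> E \<Longrightarrow> card e = 2"
    "\<And>e. e \<in> E \<Longrightarrow> e \<noteq> {}"
proof -
  show "finite V" "\<And>e. e \<in> E \<Longrightarrow> e \<subseteq> V" "\<And>e. e \<in> E \<Longrightarrow> card e = 2"
    using assms unfolding simple_graph_def by blast+
  then show "finite E" by (meson Pow_iff finite_Pow_iff finite_subset subsetI)
  show "e \<in> E \<Longrightarrow> e \<noteq> {}" for e using \<open>\<And>e. e \<in> E \<Longrightarrow> card e = 2\<close>[of e] by auto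
qed

lemma double_matching_number_le_card:
  assumes "simple_graph V E"
  shows "2 * matching_number E \<le> card V"
proof -
  note G = simple_graphD[OF assms]
  obtain M where M: "matching E M" "card M = matching_number E"
    using matching_number_attained[OF G(2)] .
  have "\<Union>M \<subseteq> V" using M(1) G(3) unfolding matching_def by blast
  then have "card (\<Union>M) \<le> card V" using G(1) by (rule card_mono[rotated])
  with card_Union_matching[OF M(1)] G(4) M(2) show ?thesis by simp
qed

section \<open>Cycles\<close>

lemma cycle_edges_iff: "e \<in> cycle_edges m \<longleftrightarrow> (\<exists>i<m. e = {i, Suc i mod m})"
  unfolding cycle_edges_def by auto

lemma cycle_edge_cases:
  assumes "e \<in> cycle_edges m"
  obtains j where "Suc j < m" "e = {j, Suc j}" | "e = {0, m - 1}"
proof -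
  obtain i where i: "i < m" "e = {i, Suc i mod m}" using assms cycle_edges_iff by blast
  show thesis
  proof (cases "Suc i < m")
    case True
    then show thesis using that(1) i by simp
  next
    case False
    with i have "Suc i = m" by simp
    with i have "e = {0, m - 1}" by auto
    then show thesis by (rule that(2))
  qed
qed

lemma simple_graph_cycle:
  assumes "m \<ge> 3"
  shows "simple_graph (cycle_vertices m) (cycle_edges m)"
  unfolding simple_graph_def cycle_vertices_def
proof (intro conjI ballI)
  fix e assume "e \<in> cycle_edges m"
  then have "e \<subseteq> {0..<m} \<and> card e = 2"
    by (cases rule: cycle_edge_cases) (use assms in auto)
  then show "e \<subseteq> {0..<m}" "card e = 2" by auto
qed simp

lemma Suc_mod_inj_on: "inj_on (\<lambda>i. Suc i mod m) {0..<m}"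
  by (rule inj_onI) (auto simp: mod_Suc split: if_splits)

text \<open>Each uncovered vertex is charged to its successor on the cycle, which is covered; a matching
  edge is the successor of at most one uncovered vertex, since its first endpoint is covered.\<close>
lemma cycle_card_uncovered_le:
  assumes "m \<ge> 3" and N: "matching (cycle_edges m) N" and H: "H \<subseteq> {0..<m}"
    and dom: "\<forall>e\<in>cycle_edges m. e \<inter> (\<Union>N \<union> H) \<noteq> {}"
  shows "card ({0..<m} - (\<Union>N \<union> H)) \<le> card N + card H"
proof -
  define nxt where "nxt i = Suc i mod m" for i
  define U where "U = {0..<m} - (\<Union>N \<union> H)"
  define S where "S = nxt ` U"
  have NC: "N \<subseteq> cycle_edges m" using N unfolding matching_def by blast
  have finN: "finite N" using NC finite_subset simple_graphD(2)[OF simple_graph_cycle[OF assms(1)]] by blast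
  have finH: "finite H" using H finite_subset by blast
  have inj: "inj_on nxt {0..<m}" unfolding nxt_def by (rule Suc_mod_inj_on)
  have succ_covered: "nxt u \<in> \<Union>N \<union> H" if "u \<in> U" for u
  proof -
    have "u < m" using that unfolding U_def by simp
    then have "{u, nxt u} \<in> cycle_edges m" unfolding nxt_def cycle_edges_iff by blast
    with dom have "{u, nxt u} \<inter> (\<Union>N \<union> H) \<noteq> {}" by blast
    moreover have "u \<notin> \<Union>N \<union> H" using that unfolding U_def by simp
    ultimately show ?thesis by auto
  qed
  have at_most_one: "card (S \<inter> e) \<le> 1" if e: "e \<in> N" for e
  proof -
    have "e \<in> cycle_edges m" using e NC by blast
    then obtain i where i: "i < m" "e = {i, nxt i}" unfolding nxt_def cycle_edges_iff by blast
    have "nxt i \<notin> S" if "i \<in> S"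
    proof
      assume "nxt i \<in> S"
      then obtain u where "u \<in> U" "nxt u = nxt i" unfolding S_def by (metis imageE)
      moreover have "u \<in> {0..<m}" "i \<in> {0..<m}" using \<open>u \<in> U\<close> i(1) unfolding U_def by auto
      ultimately have "u = i" using inj by (simp add: inj_on_eq_iff)
      moreover have "i \<in> \<Union>N" using e i(2) by blast
      ultimately show False using \<open>u \<in> U\<close> unfolding U_def by blast
    qed
    then have "S \<inter> e \<subseteq> {nxt i} \<or> S \<inter> e \<subseteq> {i}" unfolding i(2) by blast
    then show ?thesis using card_mono[of "{nxt i}" "S \<inter> e"] card_mono[of "{i}" "S \<inter> e"] by auto
  qed
  have "card U = card S" unfolding S_def U_def by (intro card_image[symmetric] inj_on_subset[OF inj]) auto
  also have "\<dots> \<le> card (\<Union>e\<in>N. S \<inter> e) + card H"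
  proof -
    have "S \<subseteq> (\<Union>e\<in>N. S \<inter> e) \<union> H" using succ_covered unfolding S_def by blast
    moreover have "finite ((\<Union>e\<in>N. S \<inter> e) \<union> H)" using finN finH unfolding S_def U_def by simp
    ultimately have "card S \<le> card ((\<Union>e\<in>N. S \<inter> e) \<union> H)" by (rule card_mono[rotated])
    then show ?thesis using card_Un_le[of "\<Union>e\<in>N. S \<inter> e" H] by linarith
  qed
  also have "card (\<Union>e\<in>N. S \<inter> e) \<le> (\<Sum>e\<in>N. card (S \<inter> e))" by (rule card_UN_le[OF finN])
  also have "\<dots> \<le> card N" using sum_mono[OF at_most_one] by simp
  finally show ?thesis unfolding U_def by simp
qed

lemma cycle_dominating_bound:
  assumes "m \<ge> 3" and N: "matching (cycle_edges m) N" and H: "H \<subseteq> {0..<m}"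
    and dom: "\<forall>e\<in>cycle_edges m. e \<inter> (\<Union>N \<union> H) \<noteq> {}"
  shows "m \<le> 3 * card N + 2 * card H"
proof -
  define T where "T = \<Union>N \<union> H"
  have G: "simple_graph {0..<m} (cycle_edges m)"
    using simple_graph_cycle[OF assms(1)] unfolding cycle_vertices_def .
  have NC: "N \<subseteq> cycle_edges m" using N unfolding matching_def by blast
  have "\<Union>N \<subseteq> {0..<m}" using NC simple_graphD(3)[OF G] by blast
  with H have "T \<subseteq> {0..<m}" unfolding T_def by blast
  then have finT: "finite T" using finite_subset by blast
  have "card T \<le> 2 * card N + card H"
    using card_Un_le[of "\<Union>N" H] card_Union_le_double[of N] NC simple_graphD(4)[OF G]
    unfolding T_def by fastforce
  moreover have "m \<le> card ({0..<m} - T) + card T"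
  proof -
    have "card {0..<m} \<le> card (({0..<m} - T) \<union> T)" using finT by (intro card_mono) auto
    then show ?thesis using card_Un_le[of "{0..<m} - T" T] by simp
  qed
  moreover have "card ({0..<m} - T) \<le> card N + card H"
    unfolding T_def using assms by (rule cycle_card_uncovered_le)
  ultimately show ?thesis by linarith
qed

definition cycle_pairs :: "nat \<Rightarrow> nat \<Rightarrow> nat set set" where
  "cycle_pairs r q = (\<lambda>i. {3 * i + r, Suc (3 * i + r)}) ` {..<q}"

lemma mem_Union_cycle_pairs:
  "x \<in> \<Union>(cycle_pairs r q) \<longleftrightarrow> (\<exists>i<q. x = 3 * i + r \<or> x = Suc (3 * i + r))"
  unfolding cycle_pairs_def by auto

lemma card_cycle_pairs_le: "card (cycle_pairs r q) \<le> q"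
  unfolding cycle_pairs_def using card_image_le[of "{..<q}"] by simp

lemma matching_cycle_pairs:
  assumes "3 * q + r \<le> Suc m"
  shows "matching (cycle_edges m) (cycle_pairs r q)"
  unfolding matching_def
proof (intro conjI ballI impI)
  show "cycle_pairs r q \<subseteq> cycle_edges m"
  proof
    fix f assume "f \<in> cycle_pairs r q"
    then obtain i where "i < q" "f = {3 * i + r, Suc (3 * i + r)}" unfolding cycle_pairs_def by blast
    moreover from this assms have "Suc (3 * i + r) < m" by linarith
    ultimately show "f \<in> cycle_edges m" unfolding cycle_edges_iff by (intro exI[of _ "3 * i + r"]) auto
  qed
  fix f g assume "f \<in> cycle_pairs r q" "g \<in> cycle_pairs r q" "f \<noteq> g"
  then obtain i j where f: "f = {3 * i + r, Suc (3 * i + r)}" and g: "g = {3 * j + r, Suc (3 * j + r)}"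
    unfolding cycle_pairs_def by blast
  with \<open>f \<noteq> g\<close> have "i \<noteq> j" by blast
  then have "3 * i + r \<noteq> 3 * j + r" "3 * i + r \<noteq> Suc (3 * j + r)" "Suc (3 * i + r) \<noteq> 3 * j + r"
    by presburger+
  then show "f \<inter> g = {}" unfolding f g by auto
qed

lemma cycle_pairs_cover:
  assumes "r \<le> Suc j" "Suc j < 3 * q + r"
  shows "j \<in> \<Union>(cycle_pairs r q) \<or> Suc j \<in> \<Union>(cycle_pairs r q)"
proof -
  define i where "i = (Suc j - r) div 3"
  have "i < q" using assms unfolding i_def by linarith
  moreover have "j = Suc (3 * i + r) \<or> Suc j = 3 * i + r \<or> Suc j = Suc (3 * i + r)"
    using assms(1) unfolding i_def by presburger
  ultimately show ?thesis unfolding mem_Union_cycle_pairs by blast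
qed

lemma maximal_matching_cycle_pairs:
  assumes "m \<ge> 3" "m mod 3 = 0"
  shows "maximal_matching (cycle_edges m) (cycle_pairs 0 (m div 3))"
proof (rule maximal_matchingI)
  let ?D = "cycle_pairs 0 (m div 3)"
  have m: "m = 3 * (m div 3)" using assms(2) div_mult_mod_eq[of m 3] by linarith
  show "matching (cycle_edges m) ?D" by (rule matching_cycle_pairs) (use m in linarith)
  show "\<exists>f\<in>?D. e \<inter> f \<noteq> {}" if "e \<in> cycle_edges m" for e
    using that
  proof (cases rule: cycle_edge_cases)
    case (1 j)
    have "j \<in> \<Union>?D \<or> Suc j \<in> \<Union>?D" by (rule cycle_pairs_cover) (use 1(1) m in linarith)+
    then show ?thesis using 1(2) by blast
  next
    case 2
    have "0 \<in> \<Union>?D" unfolding mem_Union_cycle_pairs using assms(1) by auto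
    then show ?thesis using 2 by blast
  qed
qed

lemma maximal_matching_insert_cycle_pairs:
  assumes "m \<ge> 3" "m mod 3 \<noteq> 0"
  shows "maximal_matching (cycle_edges m) (insert {0, 1} (cycle_pairs 2 (m div 3)))"
proof (rule maximal_matchingI)
  let ?P = "cycle_pairs 2 (m div 3)"
  have m: "m \<le> 3 * (m div 3) + 2" "3 * (m div 3) + 2 \<le> Suc m"
    using assms(2) div_mult_mod_eq[of m 3] mod_less_divisor[of 3 m] by linarith+
  show "matching (cycle_edges m) (insert {0, 1} ?P)"
  proof (rule matching_insert)
    show "matching (cycle_edges m) ?P" using m(2) by (rule matching_cycle_pairs)
    show "{0, 1} \<in> cycle_edges m" unfolding cycle_edges_iff using assms(1) by (intro exI[of _ 0]) auto
    have "0 \<notin> \<Union>?P" "1 \<notin> \<Union>?P" unfolding mem_Union_cycle_pairs by auto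
    then show "{0, 1} \<inter> \<Union>?P = {}" by blast
  qed
  show "\<exists>f\<in>insert {0, 1} ?P. e \<inter> f \<noteq> {}" if "e \<in> cycle_edges m" for e
    using that
  proof (cases rule: cycle_edge_cases)
    case (1 j)
    show ?thesis
    proof (cases "j = 0")
      case False
      have "j \<in> \<Union>?P \<or> Suc j \<in> \<Union>?P" by (rule cycle_pairs_cover) (use 1(1) m False in linarith)+
      then show ?thesis using 1(2) by blast
    qed (simp add: 1)
  qed simp
qed

lemma cycle_maximal_matching_card_le:
  assumes "m \<ge> 3"
  obtains D where "maximal_matching (cycle_edges m) D" "card D \<le> (m + 2) div 3"
proof (cases "m mod 3 = 0")
  case True
  then have "m div 3 = (m + 2) div 3" by presburger
  with that maximal_matching_cycle_pairs[OF assms True] card_cycle_pairs_le[of 0 "m div 3"]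
  show thesis by simp
next
  case False
  have "finite (cycle_pairs 2 (m div 3))" unfolding cycle_pairs_def by simp
  then have "card (insert {0, 1} (cycle_pairs 2 (m div 3))) \<le> m div 3 + 1"
    using card_cycle_pairs_le[of 2 "m div 3"] by (simp add: card_insert_if)
  moreover have "m div 3 + 1 = (m + 2) div 3" using False by presburger
  ultimately show thesis using that maximal_matching_insert_cycle_pairs[OF assms False] by simp
qed

lemma cycle_saturation_number:
  assumes "m \<ge> 3"
  shows "saturation_number (cycle_edges m) = (m + 2) div 3"
proof -
  have G: "simple_graph (cycle_vertices m) (cycle_edges m)" by (rule simple_graph_cycle[OF assms])
  obtain D where "maximal_matching (cycle_edges m) D" "card D \<le> (m + 2) div 3"
    using cycle_maximal_matching_card_le[OF assms] .
  then show ?thesis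
  proof (rule saturation_number_eqI[OF simple_graphD(2)[OF G]])
    fix M assume M: "maximal_matching (cycle_edges m) M"
    have "\<forall>e\<in>cycle_edges m. e \<inter> (\<Union>M \<union> {}) \<noteq> {}"
      using maximal_matching_meets[OF M] simple_graphD(5)[OF G] by blast
    then have "m \<le> 3 * card M"
      using cycle_dominating_bound[OF assms, of M "{}"] M unfolding maximal_matching_def by simp
    then show "(m + 2) div 3 \<le> card M" by simp
  qed
qed

lemma cycle_matching_avoiding_zero:
  assumes "m \<ge> 3"
  obtains D where "matching (cycle_edges m) D" "0 \<notin> \<Union>D"
    "\<forall>e\<in>cycle_edges m. 0 \<in> e \<or> (\<exists>f\<in>D. e \<inter> f \<noteq> {})" "card D \<le> m div 3"
proof
  define r :: nat where "r = (if m mod 3 = 0 then 1 else 2)"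
  have r: "1 \<le> r" "m \<le> 3 * (m div 3) + r" "3 * (m div 3) + r \<le> Suc m"
    using div_mult_mod_eq[of m 3] mod_less_divisor[of 3 m] unfolding r_def
    by (cases "m mod 3 = 0"; simp; linarith)+
  show "matching (cycle_edges m) (cycle_pairs r (m div 3))"
    using r(3) by (rule matching_cycle_pairs)
  show "0 \<notin> \<Union>(cycle_pairs r (m div 3))" unfolding mem_Union_cycle_pairs using r(1) by auto
  show "card (cycle_pairs r (m div 3)) \<le> m div 3" by (rule card_cycle_pairs_le)
  show "\<forall>e\<in>cycle_edges m. 0 \<in> e \<or> (\<exists>f\<in>cycle_pairs r (m div 3). e \<inter> f \<noteq> {})"
  proof
    fix e assume "e \<in> cycle_edges m"
    then show "0 \<in> e \<or> (\<exists>f\<in>cycle_pairs r (m div 3). e \<inter> f \<noteq> {})"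
    proof (cases rule: cycle_edge_cases)
      case (1 j)
      show ?thesis
      proof (cases "j = 0")
        case False
        then have "r \<le> Suc j" "Suc j < 3 * (m div 3) + r" using 1(1) r unfolding r_def by auto
        then have "j \<in> \<Union>(cycle_pairs r (m div 3)) \<or> Suc j \<in> \<Union>(cycle_pairs r (m div 3))"
          by (rule cycle_pairs_cover)
        then show ?thesis using 1(2) by blast
      qed (simp add: 1)
    qed simp
  qed
qed

section \<open>Coronas\<close>

definition copy_edge :: "'a \<Rightarrow> 'b set \<Rightarrow> ('a + 'a \<times> 'b) set" where
  "copy_edge v e = (\<lambda>w. Inr (v, w)) ` e"

definition spoke :: "'a \<Rightarrow> 'b \<Rightarrow> ('a + 'a \<times> 'b) set" where
  "spoke v w = {Inl v, Inr (v, w)}"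

lemma copy_edge_eq_iff [simp]: "copy_edge v e = copy_edge v e' \<longleftrightarrow> e = e'"
  unfolding copy_edge_def by (auto simp: inj_image_eq_iff inj_def)

lemma spoke_eq_iff [simp]: "spoke v w = spoke v w' \<longleftrightarrow> w = w'"
  unfolding spoke_def by (auto simp: doubleton_eq_iff)

lemma Inl_notin_copy_edge [simp]: "Inl u \<notin> copy_edge v e"
  unfolding copy_edge_def by auto

lemma Inr_in_copy_edge_iff [simp]: "Inr (u, w) \<in> copy_edge v e \<longleftrightarrow> u = v \<and> w \<in> e"
  unfolding copy_edge_def by auto

lemma copy_edge_neq_spoke [simp]: "copy_edge v e \<noteq> spoke u w" "spoke u w \<noteq> copy_edge v e"
  unfolding spoke_def by (metis Inl_notin_copy_edge insertI1)+

lemma copy_edge_Int [simp]: "copy_edge v e \<inter> copy_edge v e' = copy_edge v (e \<inter> e')"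
  unfolding copy_edge_def by auto

lemma copy_edge_empty_iff [simp]: "copy_edge v e = {} \<longleftrightarrow> e = {}"
  unfolding copy_edge_def by simp

lemma corona_edges_iff:
  "f \<in> corona_edges V E V2 E2 \<longleftrightarrow>
    (\<exists>e\<in>E. f = Inl ` e) \<or> (\<exists>v\<in>V. \<exists>e\<in>E2. f = copy_edge v e) \<or> (\<exists>v\<in>V. \<exists>w\<in>V2. f = spoke v w)"
  unfolding corona_edges_def copy_edge_def spoke_def by blast

lemma Inl_image_in_corona_edges: "e \<in> E \<Longrightarrow> Inl ` e \<in> corona_edges V E V2 E2"
  unfolding corona_edges_iff by blast

lemma copy_edge_in_corona_edges: "v \<in> V \<Longrightarrow> e \<in> E2 \<Longrightarrow> copy_edge v e \<in> corona_edges V E V2 E2"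
  unfolding corona_edges_iff by blast

lemma spoke_in_corona_edges: "v \<in> V \<Longrightarrow> w \<in> V2 \<Longrightarrow> spoke v w \<in> corona_edges V E V2 E2"
  unfolding corona_edges_iff by blast

lemma corona_edges_eq:
  "corona_edges V E V2 E2 =
    (\<lambda>e. Inl ` e) ` E \<union> case_prod copy_edge ` (V \<times> E2) \<union> case_prod spoke ` (V \<times> V2)"
  by (rule set_eqI) (auto simp: corona_edges_iff)

lemma finite_corona_edges:
  "finite V \<Longrightarrow> finite E \<Longrightarrow> finite V2 \<Longrightarrow> finite E2 \<Longrightarrow> finite (corona_edges V E V2 E2)"
  unfolding corona_edges_eq by simp

definition base_part :: "('a + 'a \<times> 'b) set set \<Rightarrow> 'a set set \<Rightarrow> 'a set set" where
  "base_part M E = {e \<in> E. Inl ` e \<in> M}"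

definition copy_part :: "('a + 'a \<times> 'b) set set \<Rightarrow> 'b set set \<Rightarrow> 'a \<Rightarrow> 'b set set" where
  "copy_part M E2 v = {e \<in> E2. copy_edge v e \<in> M}"

definition spoke_part :: "('a + 'a \<times> 'b) set set \<Rightarrow> 'b set \<Rightarrow> 'a \<Rightarrow> 'b set" where
  "spoke_part M V2 v = {w \<in> V2. spoke v w \<in> M}"

lemma Inr_mem_copy_edge_or_spoke:
  assumes "simple_graph V2 E2" "x \<in> copy_edge v ` copy_part M E2 v \<union> spoke v ` spoke_part M V2 v"
  shows "(\<exists>w. Inr (v, w) \<in> x) \<and> (\<forall>u w. Inr (u, w) \<in> x \<longrightarrow> u = v)"
proof -
  from assms(2) consider e where "e \<in> E2" "x = copy_edge v e" | w where "x = spoke v w"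
    unfolding copy_part_def spoke_part_def by blast
  then show ?thesis
  proof cases
    case 1
    then obtain w where "w \<in> e" using simple_graphD(5)[OF assms(1)] by blast
    with 1 show ?thesis by auto
  qed (auto simp: spoke_def)
qed

lemma card_copy_edges_and_spokes:
  assumes H: "simple_graph V2 E2" and "finite V"
  shows "card (\<Union>v\<in>V. copy_edge v ` copy_part M E2 v \<union> spoke v ` spoke_part M V2 v) =
    (\<Sum>v\<in>V. card (copy_part M E2 v) + card (spoke_part M V2 v))"
proof -
  note H' = simple_graphD[OF H]
  define K where "K v = copy_edge v ` copy_part M E2 v \<union> spoke v ` spoke_part M V2 v" for v
  have owner: "(\<exists>w. Inr (v, w) \<in> x) \<and> (\<forall>u w. Inr (u, w) \<in> x \<longrightarrow> u = v)" if "x \<in> K v" for x v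
    using H that unfolding K_def by (rule Inr_mem_copy_edge_or_spoke)
  have "K u \<inter> K v = {}" if "u \<noteq> v" for u v
  proof (rule ccontr)
    assume "K u \<inter> K v \<noteq> {}"
    then obtain x where x: "x \<in> K u" "x \<in> K v" by blast
    then obtain w where "Inr (u, w) \<in> x" using owner by blast
    with owner[OF x(2)] that show False by blast
  qed
  moreover have "finite (K v)" for v unfolding K_def copy_part_def spoke_part_def using H'(1,2) by simp
  ultimately have "card (\<Union>v\<in>V. K v) = (\<Sum>v\<in>V. card (K v))"
    using assms(2) by (intro card_UN_disjoint) auto
  moreover have "card (K v) = card (copy_part M E2 v) + card (spoke_part M V2 v)" for v
  proof -
    have "card (K v) = card (copy_edge v ` copy_part M E2 v) + card (spoke v ` spoke_part M V2 v)"
      unfolding K_def using H'(1,2)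
      by (intro card_Un_disjoint) (auto simp: copy_part_def spoke_part_def)
    then show ?thesis by (simp add: card_image inj_on_def)
  qed
  ultimately show ?thesis unfolding K_def by simp
qed

lemma card_corona_matching_ge:
  assumes G: "simple_graph V E" and H: "simple_graph V2 E2"
    and M: "M \<subseteq> corona_edges V E V2 E2"
  shows "card (base_part M E) + (\<Sum>v\<in>V. card (copy_part M E2 v) + card (spoke_part M V2 v)) \<le> card M"
proof -
  note G' = simple_graphD[OF G] and H' = simple_graphD[OF H]
  define B :: "('a + 'a \<times> 'b) set set" where "B = (\<lambda>e. Inl ` e) ` base_part M E"
  define K where "K = (\<Union>v\<in>V. copy_edge v ` copy_part M E2 v \<union> spoke v ` spoke_part M V2 v)"
  have "card B = card (base_part M E)"
    unfolding B_def by (intro card_image inj_onI) (simp add: inj_image_eq_iff)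
  moreover have "card K = (\<Sum>v\<in>V. card (copy_part M E2 v) + card (spoke_part M V2 v))"
    unfolding K_def using H G'(1) by (rule card_copy_edges_and_spokes)
  moreover have "B \<inter> K = {}"
  proof -
    have "\<exists>v w. Inr (v, w) \<in> x" if "x \<in> K" for x
    proof -
      from that obtain v where "x \<in> copy_edge v ` copy_part M E2 v \<union> spoke v ` spoke_part M V2 v"
        unfolding K_def by blast
      with H show ?thesis by (blast dest: Inr_mem_copy_edge_or_spoke)
    qed
    moreover have "Inr y \<notin> x" if "x \<in> B" for x y using that unfolding B_def by auto
    ultimately show ?thesis by blast
  qed
  moreover have "finite B" "finite K"
    unfolding B_def K_def base_part_def copy_part_def spoke_part_def using G'(1,2) H'(1,2) by simp_all
  ultimately have "card (B \<union> K) =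
      card (base_part M E) + (\<Sum>v\<in>V. card (copy_part M E2 v) + card (spoke_part M V2 v))"
    by (simp add: card_Un_disjoint)
  moreover have "card (B \<union> K) \<le> card M"
  proof (rule card_mono)
    show "finite M" using M finite_corona_edges[OF G'(1,2) H'(1,2)] finite_subset by blast
    show "B \<union> K \<subseteq> M" unfolding B_def K_def base_part_def copy_part_def spoke_part_def by auto
  qed
  ultimately show ?thesis by simp
qed

lemma matching_base_part:
  assumes "matching (corona_edges V E V2 E2) M"
  shows "matching E (base_part M E)"
  unfolding matching_def
proof (intro conjI ballI impI)
  fix e1 e2 assume e: "e1 \<in> base_part M E" "e2 \<in> base_part M E" "e1 \<noteq> e2"
  then have "Inl ` e1 \<noteq> (Inl ` e2 :: ('a + 'a \<times> 'b) set)" by (simp add: inj_image_eq_iff)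
  with assms e have "Inl ` e1 \<inter> (Inl ` e2 :: ('a + 'a \<times> 'b) set) = {}"
    unfolding base_part_def by (auto dest: matching_disjointD)
  then show "e1 \<inter> e2 = {}" by auto
qed (auto simp: base_part_def)

lemma matching_copy_part:
  assumes "matching (corona_edges V E V2 E2) M"
  shows "matching E2 (copy_part M E2 v)"
  unfolding matching_def
proof (intro conjI ballI impI)
  fix e1 e2 assume e: "e1 \<in> copy_part M E2 v" "e2 \<in> copy_part M E2 v" "e1 \<noteq> e2"
  with assms have "copy_edge v e1 \<inter> copy_edge v e2 = {}"
    unfolding copy_part_def by (intro matching_disjointD[of _ M]) auto
  then show "e1 \<inter> e2 = {}" by simp
qed (auto simp: copy_part_def)

lemma card_spoke_part_le_1:
  assumes "matching (corona_edges V E V2 E2) M" "finite V2"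
  shows "card (spoke_part M V2 v) \<le> 1"
proof -
  have "w = w'" if "w \<in> spoke_part M V2 v" "w' \<in> spoke_part M V2 v" for w w'
  proof -
    have "Inl v \<in> spoke v w \<inter> spoke v w'" by (simp add: spoke_def)
    with assms(1) that show ?thesis unfolding spoke_part_def by (auto dest: matching_disjointD)
  qed
  then show ?thesis using assms(2) card_le_Suc0_iff_eq[of "spoke_part M V2 v"]
    unfolding spoke_part_def by auto
qed

lemma corona_matching_edge_at_copy:
  assumes "M \<subseteq> corona_edges V E V2 E2" "f \<in> M" "Inr (v, w) \<in> f"
  shows "w \<in> spoke_part M V2 v \<union> \<Union>(copy_part M E2 v)"
proof -
  have "f \<in> corona_edges V E V2 E2" using assms(1,2) by blast
  then consider e where "f = Inl ` e" | u e where "e \<in> E2" "f = copy_edge u e"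
    | u x where "x \<in> V2" "f = spoke u x"
    unfolding corona_edges_iff by blast
  then show ?thesis
  proof cases
    case 1 with assms(3) show ?thesis by auto
  next
    case (2 u e)
    with assms show ?thesis unfolding copy_part_def by auto
  next
    case (3 u x)
    with assms show ?thesis unfolding spoke_part_def spoke_def by auto
  qed
qed

lemma corona_matching_edge_at_hub:
  assumes "M \<subseteq> corona_edges V E V2 E2" "f \<in> M" "Inl v \<in> f"
  shows "v \<in> \<Union>(base_part M E) \<or> spoke_part M V2 v \<noteq> {}"
proof -
  have "f \<in> corona_edges V E V2 E2" using assms(1,2) by blast
  then consider e where "e \<in> E" "f = Inl ` e" | u e where "f = copy_edge u e"
    | u x where "x \<in> V2" "f = spoke u x"
    unfolding corona_edges_iff by blast
  then show ?thesis
  proof cases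
    case (1 e)
    with assms show ?thesis unfolding base_part_def by auto
  next
    case (2 u e)
    with assms(3) show ?thesis by simp
  next
    case (3 u x)
    with assms show ?thesis unfolding spoke_part_def spoke_def by auto
  qed
qed

lemma copy_and_spoke_part_dominate:
  assumes M: "maximal_matching (corona_edges V E V2 E2) M" and H: "simple_graph V2 E2"
    and "v \<in> V" "e \<in> E2"
  shows "e \<inter> (\<Union>(copy_part M E2 v) \<union> spoke_part M V2 v) \<noteq> {}"
proof -
  have MC: "M \<subseteq> corona_edges V E V2 E2" using M unfolding maximal_matching_def matching_def by blast
  have "copy_edge v e \<in> corona_edges V E V2 E2" using assms(3,4) by (rule copy_edge_in_corona_edges)
  moreover have "copy_edge v e \<noteq> {}" using simple_graphD(5)[OF H assms(4)] by (simp add: copy_edge_def)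
  ultimately obtain f where "f \<in> M" "copy_edge v e \<inter> f \<noteq> {}"
    using maximal_matching_meets[OF M] by blast
  then obtain w where "w \<in> e" "f \<in> M" "Inr (v, w) \<in> f" unfolding copy_edge_def by blast
  with corona_matching_edge_at_copy[OF MC] show ?thesis by blast
qed

lemma copy_part_covers:
  assumes M: "maximal_matching (corona_edges V E V2 E2) M" and "v \<in> V"
    and "spoke_part M V2 v = {}" "v \<notin> \<Union>(base_part M E)"
  shows "V2 \<subseteq> \<Union>(copy_part M E2 v)"
proof
  fix w assume "w \<in> V2"
  have MC: "M \<subseteq> corona_edges V E V2 E2" using M unfolding maximal_matching_def matching_def by blast
  have "spoke v w \<in> corona_edges V E V2 E2" using assms(2) \<open>w \<in> V2\<close> by (rule spoke_in_corona_edges)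
  then obtain f where f: "f \<in> M" "spoke v w \<inter> f \<noteq> {}"
    using maximal_matching_meets[OF M] by (auto simp: spoke_def)
  then consider "Inl v \<in> f" | "Inr (v, w) \<in> f" unfolding spoke_def by blast
  then show "w \<in> \<Union>(copy_part M E2 v)"
  proof cases
    case 1
    with corona_matching_edge_at_hub[OF MC f(1)] assms(3,4) show ?thesis by blast
  next
    case 2
    with corona_matching_edge_at_copy[OF MC f(1)] assms(3) show ?thesis by blast
  qed
qed

text \<open>Vertices of G saturated by M0 take a maximal matching D0 of their copy; the others take a
  spoke to w0 together with a matching D1 that dominates the rest of their copy.\<close>
definition copy_block :: "'a set \<Rightarrow> 'b set set \<Rightarrow> 'b set set \<Rightarrow> 'b \<Rightarrow> 'a \<Rightarrow> ('a + 'a \<times> 'b) set set" where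
  "copy_block S D0 D1 w0 v =
     (if v \<in> S then copy_edge v ` D0 else insert (spoke v w0) (copy_edge v ` D1))"

definition corona_lift :: "'a set \<Rightarrow> 'a set set \<Rightarrow> 'b set set \<Rightarrow> 'b set set \<Rightarrow> 'b \<Rightarrow> ('a + 'a \<times> 'b) set set" where
  "corona_lift V M0 D0 D1 w0 = (\<lambda>e. Inl ` e) ` M0 \<union> (\<Union>v\<in>V. copy_block (\<Union>M0) D0 D1 w0 v)"

lemma mem_Union_copy_block:
  assumes "x \<in> \<Union>(copy_block S D0 D1 w0 v)"
  shows "(x = Inl v \<and> v \<notin> S) \<or> (\<exists>w. x = Inr (v, w))"
  using assms unfolding copy_block_def copy_edge_def spoke_def by (auto split: if_splits)

lemma corona_lift_subset:
  assumes "M0 \<subseteq> E" "D0 \<subseteq> E2" "D1 \<subseteq> E2" "w0 \<in> V2"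
  shows "corona_lift V M0 D0 D1 w0 \<subseteq> corona_edges V E V2 E2"
  using assms
  by (auto simp: corona_lift_def copy_block_def split: if_splits
      intro: Inl_image_in_corona_edges copy_edge_in_corona_edges spoke_in_corona_edges)

lemma disjoint_copy_edges: "disjoint D \<Longrightarrow> disjoint (copy_edge v ` D)"
  unfolding copy_edge_def by (rule disjoint_image) (simp add: inj_on_def)

lemma disjoint_corona_lift:
  assumes "disjoint M0" "disjoint D0" "disjoint D1" "w0 \<notin> \<Union>D1"
  shows "disjoint (corona_lift V M0 D0 D1 w0)"
proof -
  let ?B = "(\<lambda>e. Inl ` e) ` M0 :: ('a + 'a \<times> 'b) set set" and ?K = "copy_block (\<Union>M0) D0 D1 w0"
  have B: "disjoint ?B" by (rule disjoint_image[OF _ assms(1)]) simp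
  have blocks: "disjoint (?K v)" for v
  proof (cases "v \<in> \<Union>M0")
    case True
    then show ?thesis unfolding copy_block_def using disjoint_copy_edges[OF assms(2)] by simp
  next
    case False
    have "disjnt (spoke v w0) f" if "f \<in> copy_edge v ` D1" for f
      using that assms(4) unfolding spoke_def disjnt_def copy_edge_def by auto
    then show ?thesis unfolding copy_block_def using False disjoint_copy_edges[OF assms(3)]
      by (auto simp: pairwise_insert disjnt_sym)
  qed
  have "disjoint_family_on (\<lambda>v. \<Union>(?K v)) V"
    unfolding disjoint_family_on_def
  proof (intro ballI impI equals0I)
    fix u v x assume "u \<noteq> v" and "x \<in> \<Union>(?K u) \<inter> \<Union>(?K v)"
    then have "x \<in> \<Union>(?K u)" "x \<in> \<Union>(?K v)" by auto
    from this[THEN mem_Union_copy_block] \<open>u \<noteq> v\<close> show False by auto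
  qed
  with blocks have UN: "disjoint (\<Union>v\<in>V. ?K v)" by (rule disjoint_UN)
  have "\<Union>?B \<inter> \<Union>(\<Union>v\<in>V. ?K v) = {}"
  proof (rule equals0I)
    fix x assume "x \<in> \<Union>?B \<inter> \<Union>(\<Union>v\<in>V. ?K v)"
    then obtain u v where "u \<in> \<Union>M0" "x = Inl u" "x \<in> \<Union>(?K v)" by auto
    from this(3)[THEN mem_Union_copy_block] this(1,2) show False by auto
  qed
  with B UN show ?thesis unfolding corona_lift_def by (rule disjoint_union)
qed

lemma corona_lift_covers_hub:
  assumes "v \<in> V"
  obtains f where "f \<in> corona_lift V M0 D0 D1 w0" "Inl v \<in> f"
proof (cases "v \<in> \<Union>M0")
  case True
  then obtain e where "e \<in> M0" "v \<in> e" by blast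
  then show thesis using that unfolding corona_lift_def by blast
next
  case False
  with assms have "spoke v w0 \<in> corona_lift V M0 D0 D1 w0" unfolding corona_lift_def copy_block_def by auto
  then show thesis using that unfolding spoke_def by blast
qed

lemma corona_lift_meets_copy_edge:
  assumes H: "simple_graph V2 E2" and D0: "maximal_matching E2 D0"
    and D1: "\<forall>e\<in>E2. w0 \<in> e \<or> (\<exists>f\<in>D1. e \<inter> f \<noteq> {})"
    and "v \<in> V" "e \<in> E2"
  shows "\<exists>f\<in>corona_lift V M0 D0 D1 w0. copy_edge v e \<inter> f \<noteq> {}"
proof (cases "v \<in> \<Union>M0")
  case True
  obtain f where f: "f \<in> D0" "e \<inter> f \<noteq> {}"
    using maximal_matching_meets[OF D0 assms(5) simple_graphD(5)[OF H assms(5)]] by blast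
  with True assms(4) have "copy_edge v f \<in> corona_lift V M0 D0 D1 w0"
    unfolding corona_lift_def copy_block_def by auto
  moreover have "copy_edge v e \<inter> copy_edge v f \<noteq> {}" using f(2) by simp
  ultimately show ?thesis by blast
next
  case False
  then have spoke_in: "spoke v w0 \<in> corona_lift V M0 D0 D1 w0"
    and copies: "copy_edge v ` D1 \<subseteq> corona_lift V M0 D0 D1 w0"
    using assms(4) unfolding corona_lift_def copy_block_def by auto
  from D1 assms(5) consider "w0 \<in> e" | f where "f \<in> D1" "e \<inter> f \<noteq> {}" by blast
  then show ?thesis
  proof cases
    case 1
    then have "Inr (v, w0) \<in> copy_edge v e \<inter> spoke v w0" by (simp add: spoke_def)
    with spoke_in show ?thesis by blast
  next
    case (2 f)
    then have "copy_edge v f \<in> corona_lift V M0 D0 D1 w0" using copies by blast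
    moreover have "copy_edge v e \<inter> copy_edge v f \<noteq> {}" using 2(2) by simp
    ultimately show ?thesis by blast
  qed
qed

lemma corona_lift_meets:
  assumes G: "simple_graph V E" and H: "simple_graph V2 E2"
    and D0: "maximal_matching E2 D0"
    and D1: "\<forall>e\<in>E2. w0 \<in> e \<or> (\<exists>f\<in>D1. e \<inter> f \<noteq> {})"
    and "g \<in> corona_edges V E V2 E2"
  shows "\<exists>f\<in>corona_lift V M0 D0 D1 w0. g \<inter> f \<noteq> {}"
proof -
  from assms(5) consider e where "e \<in> E" "g = Inl ` e" | v e where "v \<in> V" "e \<in> E2" "g = copy_edge v e"
    | v w where "v \<in> V" "g = spoke v w"
    unfolding corona_edges_iff by blast
  then show ?thesis
  proof cases
    case (1 e)
    obtain u where "u \<in> e" using simple_graphD(5)[OF G 1(1)] by blast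
    then have "u \<in> V" "Inl u \<in> g" using simple_graphD(3)[OF G 1(1)] 1(2) by auto
    moreover obtain f where "f \<in> corona_lift V M0 D0 D1 w0" "Inl u \<in> f"
      using \<open>u \<in> V\<close> by (rule corona_lift_covers_hub)
    ultimately show ?thesis by blast
  next
    case (2 v e)
    then show ?thesis using corona_lift_meets_copy_edge[OF H D0 D1 2(1,2)] by simp
  next
    case (3 v w)
    obtain f where "f \<in> corona_lift V M0 D0 D1 w0" "Inl v \<in> f"
      using \<open>v \<in> V\<close> by (rule corona_lift_covers_hub)
    then show ?thesis using 3(2) unfolding spoke_def by blast
  qed
qed

lemma card_corona_lift_le:
  assumes "finite V" "\<Union>M0 \<subseteq> V" "finite D0" "finite D1"
  shows "card (corona_lift V M0 D0 D1 w0) \<le>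
    card M0 + card (\<Union>M0) * card D0 + card (V - \<Union>M0) * (card D1 + 1)"
proof -
  define S where "S = \<Union>M0"
  let ?K = "copy_block S D0 D1 w0" and ?B = "(\<lambda>e. Inl ` e) ` M0 :: ('a + 'a \<times> 'b) set set"
  have card_K: "card (?K v) \<le> (if v \<in> S then card D0 else card D1 + 1)" for v
  proof (cases "v \<in> S")
    case True
    then show ?thesis unfolding copy_block_def using card_image_le[OF assms(3)] by simp
  next
    case False
    then show ?thesis unfolding copy_block_def
      using card_insert_le_m1[of 1 "copy_edge v ` D1"] card_image_le[OF assms(4), of "copy_edge v"]
      by (simp add: card_insert_if assms(4))
  qed
  have "card (corona_lift V M0 D0 D1 w0) \<le> card ?B + card (\<Union>v\<in>V. ?K v)"
    unfolding corona_lift_def S_def by (rule card_Un_le)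
  also have "card ?B = card M0"
    by (rule card_image) (simp add: inj_on_def inj_image_eq_iff)
  also have "card (\<Union>v\<in>V. ?K v) \<le> (\<Sum>v\<in>V. card (?K v))" by (rule card_UN_le[OF assms(1)])
  also have "\<dots> \<le> (\<Sum>v\<in>V. if v \<in> S then card D0 else card D1 + 1)" by (rule sum_mono) (rule card_K)
  also have "\<dots> = card S * card D0 + card (V - S) * (card D1 + 1)"
    using assms(1,2) unfolding S_def[symmetric] by (simp add: sum.If_cases Int_absorb1 Diff_eq)
  finally show ?thesis unfolding S_def by simp
qed

lemma corona_lift_maximal_matching:
  assumes G: "simple_graph V E" and H: "simple_graph V2 E2" and M0: "matching E M0"
    and D0: "maximal_matching E2 D0" and D1: "matching E2 D1"
    and w0: "w0 \<in> V2" "w0 \<notin> \<Union>D1" and D1_dom: "\<forall>e\<in>E2. w0 \<in> e \<or> (\<exists>f\<in>D1. e \<inter> f \<noteq> {})"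
  shows "maximal_matching (corona_edges V E V2 E2) (corona_lift V M0 D0 D1 w0)"
proof (rule maximal_matchingI)
  have sub: "M0 \<subseteq> E" "D0 \<subseteq> E2" "D1 \<subseteq> E2" and disj: "disjoint M0" "disjoint D0" "disjoint D1"
    using M0 D0 D1 unfolding maximal_matching_def matching_iff_disjoint by blast+
  show "matching (corona_edges V E V2 E2) (corona_lift V M0 D0 D1 w0)"
    unfolding matching_iff_disjoint
    using corona_lift_subset[OF sub w0(1)] disjoint_corona_lift[OF disj w0(2)] by (rule conjI)
  show "\<exists>f\<in>corona_lift V M0 D0 D1 w0. g \<inter> f \<noteq> {}" if "g \<in> corona_edges V E V2 E2" for g
    using G H D0 D1_dom that by (rule corona_lift_meets)
qed

section \<open>Coronas with a cycle\<close>

lemma corona_cycle_lift: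
  assumes G: "simple_graph V E" and m: "m \<ge> 3" and M0: "matching E M0"
  obtains M where "maximal_matching (corona_edges V E (cycle_vertices m) (cycle_edges m)) M"
    "card M \<le> card M0 + card (\<Union>M0) * ((m + 2) div 3) + card (V - \<Union>M0) * (m div 3 + 1)"
proof -
  have H: "simple_graph (cycle_vertices m) (cycle_edges m)" by (rule simple_graph_cycle[OF m])
  note G' = simple_graphD[OF G] and H' = simple_graphD[OF H]
  obtain D0 where D0: "maximal_matching (cycle_edges m) D0" "card D0 = saturation_number (cycle_edges m)"
    using saturation_number_attained[OF H'(2)] .
  obtain D1 where D1: "matching (cycle_edges m) D1" "0 \<notin> \<Union>D1"
    "\<forall>e\<in>cycle_edges m. 0 \<in> e \<or> (\<exists>f\<in>D1. e \<inter> f \<noteq> {})" "card D1 \<le> m div 3"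
    using cycle_matching_avoiding_zero[OF m] .
  have "0 \<in> cycle_vertices m" using m unfolding cycle_vertices_def by simp
  with G H M0 D0(1) D1(1)
  have "maximal_matching (corona_edges V E (cycle_vertices m) (cycle_edges m)) (corona_lift V M0 D0 D1 0)"
    using D1(2,3) by (rule corona_lift_maximal_matching)
  moreover have "card (corona_lift V M0 D0 D1 0) \<le>
      card M0 + card (\<Union>M0) * ((m + 2) div 3) + card (V - \<Union>M0) * (m div 3 + 1)"
  proof -
    have "\<Union>M0 \<subseteq> V" using M0 G'(3) unfolding matching_def by blast
    moreover have "D0 \<subseteq> cycle_edges m" "D1 \<subseteq> cycle_edges m"
      using D0(1) D1(1) unfolding maximal_matching_def matching_def by blast+
    then have "finite D0" "finite D1" using H'(2) finite_subset by blast+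
    ultimately have "card (corona_lift V M0 D0 D1 0) \<le>
        card M0 + card (\<Union>M0) * card D0 + card (V - \<Union>M0) * (card D1 + 1)"
      using G'(1) by (intro card_corona_lift_le)
    also have "\<dots> \<le> card M0 + card (\<Union>M0) * ((m + 2) div 3) + card (V - \<Union>M0) * (m div 3 + 1)"
      using D0(2) D1(4) cycle_saturation_number[OF m] by simp
    finally show ?thesis .
  qed
  ultimately show thesis by (rule that)
qed

text \<open>The value claimed for the saturation number of the corona, with n = |V(G)|, a = \<alpha>'(G)
  and s(C_m) = \<lceil>m/3\<rceil> substituted.\<close>
definition corona_cycle_value :: "nat \<Rightarrow> nat \<Rightarrow> nat \<Rightarrow> nat" where
  "corona_cycle_value n a m =
     (if m mod 3 = 0 then n * (m div 3) + a + (n - 2 * a) else n * ((m + 2) div 3))"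

lemma corona_cycle_maximal_matching_card_le:
  assumes G: "simple_graph V E" and m: "m \<ge> 3"
  obtains M where "maximal_matching (corona_edges V E (cycle_vertices m) (cycle_edges m)) M"
    "card M \<le> corona_cycle_value (card V) (matching_number E) m"
proof (cases "m mod 3 = 0")
  case True
  note G' = simple_graphD[OF G]
  define n a k where "n = card V" and "a = matching_number E" and "k = m div 3"
  obtain M0 where M0: "matching E M0" "card M0 = a"
    using matching_number_attained[OF G'(2)] unfolding a_def .
  obtain M where M: "maximal_matching (corona_edges V E (cycle_vertices m) (cycle_edges m)) M"
    "card M \<le> card M0 + card (\<Union>M0) * ((m + 2) div 3) + card (V - \<Union>M0) * (m div 3 + 1)"
    using corona_cycle_lift[OF G m M0(1)] .
  have "\<Union>M0 \<subseteq> V" using M0(1) G'(3) unfolding matching_def by blast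
  moreover have UM0: "card (\<Union>M0) = 2 * a" using card_Union_matching[OF M0(1)] G'(4) M0(2) by simp
  ultimately have "card (V - \<Union>M0) = n - 2 * a"
    using G'(1) unfolding n_def by (simp add: card_Diff_subset finite_subset)
  moreover have "(m + 2) div 3 = k" using True unfolding k_def by presburger
  ultimately have "card M \<le> a + 2 * a * k + (n - 2 * a) * (k + 1)"
    using M(2) M0(2) UM0 unfolding k_def by simp
  also obtain r where "n = 2 * a + r"
    using double_matching_number_le_card[OF G] le_Suc_ex unfolding n_def a_def by blast
  then have "a + 2 * a * k + (n - 2 * a) * (k + 1) = n * k + a + (n - 2 * a)" by (simp add: algebra_simps)
  finally show thesis using that M(1) True unfolding corona_cycle_value_def n_def a_def k_def by simp
next
  case False
  have "matching E {}" by (simp add: matching_def)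
  with G m obtain M where M: "maximal_matching (corona_edges V E (cycle_vertices m) (cycle_edges m)) M"
    "card M \<le> card V * (m div 3 + 1)"
    by (rule corona_cycle_lift) simp
  moreover have "m div 3 + 1 = (m + 2) div 3" using False by presburger
  ultimately have "card M \<le> card V * ((m + 2) div 3)" by (simp only:)
  with M(1) False show thesis by (intro that) (simp_all add: corona_cycle_value_def)
qed

lemma corona_cycle_copy_cost:
  assumes M: "maximal_matching (corona_edges V E (cycle_vertices m) (cycle_edges m)) M"
    and m: "m \<ge> 3" and v: "v \<in> V"
  defines "N \<equiv> copy_part M (cycle_edges m) v" and "S \<equiv> spoke_part M (cycle_vertices m) v"
  shows "(m + 2) div 3 \<le> card N + card S"
    and "m mod 3 = 0 \<Longrightarrow> v \<notin> \<Union>(base_part M E) \<Longrightarrow> m div 3 + 1 \<le> card N + card S"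
proof -
  have H: "simple_graph (cycle_vertices m) (cycle_edges m)" by (rule simple_graph_cycle[OF m])
  have mM: "matching (corona_edges V E (cycle_vertices m) (cycle_edges m)) M"
    using M unfolding maximal_matching_def by blast
  have N: "matching (cycle_edges m) N" unfolding N_def using mM by (rule matching_copy_part)
  have S: "S \<subseteq> {0..<m}" "card S \<le> 1"
    using card_spoke_part_le_1[OF mM simple_graphD(1)[OF H]]
    unfolding S_def spoke_part_def cycle_vertices_def by auto
  have "\<forall>e\<in>cycle_edges m. e \<inter> (\<Union>N \<union> S) \<noteq> {}"
    using copy_and_spoke_part_dominate[OF M H v] unfolding N_def S_def by blast
  with m N S(1) have bound: "m \<le> 3 * card N + 2 * card S" by (rule cycle_dominating_bound)
  have ceil: "(m + 2) div 3 \<le> x" if "m \<le> 3 * x" for x using that by linarith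
  have "3 * card N + 2 * card S \<le> 3 * (card N + card S)" by simp
  with bound show "(m + 2) div 3 \<le> card N + card S" by (intro ceil) (rule le_trans)
  assume "m mod 3 = 0" and uncovered: "v \<notin> \<Union>(base_part M E)"
  then obtain k where k: "m = 3 * k" by (auto elim: dvdE)
  then have "m div 3 = k" "k \<ge> 1" using m by simp_all
  show "m div 3 + 1 \<le> card N + card S"
  proof (cases "S = {}")
    case True
    have "cycle_vertices m \<subseteq> \<Union>N"
      using copy_part_covers[OF M v True[unfolded S_def] uncovered] unfolding N_def .
    moreover have "\<Union>N \<subseteq> cycle_vertices m"
      using N simple_graphD(3)[OF H] unfolding matching_def by blast
    ultimately have "\<Union>N = cycle_vertices m" by (rule antisym[rotated])
    then have "m = card (\<Union>N)" unfolding cycle_vertices_def by simp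
    also have "\<dots> \<le> 2 * card N"
      using N simple_graphD(4)[OF H] unfolding matching_def by (intro card_Union_le_double) blast
    finally have "m \<le> 2 * card N" .
    with k \<open>m div 3 = k\<close> \<open>k \<ge> 1\<close> show ?thesis by linarith
  next
    case False
    moreover have "finite S" using S(1) finite_subset by blast
    ultimately have "card S = 1" using S(2) by (simp add: card_gt_0_iff le_antisym Suc_leI)
    with bound k \<open>m div 3 = k\<close> show ?thesis by linarith
  qed
qed

lemma corona_cycle_maximal_matching_card_ge:
  assumes G: "simple_graph V E" and m: "m \<ge> 3"
    and M: "maximal_matching (corona_edges V E (cycle_vertices m) (cycle_edges m)) M"
  shows "corona_cycle_value (card V) (matching_number E) m \<le> card M"
proof -
  let ?c = "\<lambda>v. card (copy_part M (cycle_edges m) v) + card (spoke_part M (cycle_vertices m) v)"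
  have H: "simple_graph (cycle_vertices m) (cycle_edges m)" by (rule simple_graph_cycle[OF m])
  note G' = simple_graphD[OF G]
  have mM: "matching (corona_edges V E (cycle_vertices m) (cycle_edges m)) M"
    using M unfolding maximal_matching_def by blast
  then have "M \<subseteq> corona_edges V E (cycle_vertices m) (cycle_edges m)" unfolding matching_def by blast
  with G H have total: "card (base_part M E) + (\<Sum>v\<in>V. ?c v) \<le> card M"
    by (rule card_corona_matching_ge)
  show ?thesis
  proof (cases "m mod 3 = 0")
    case True
    define U where "U = \<Union>(base_part M E)"
    have B: "matching E (base_part M E)" using mM by (rule matching_base_part)
    then have "U \<subseteq> V" "card U = 2 * card (base_part M E)"
      using G'(3,4) card_Union_matching[OF B] unfolding U_def matching_def by auto
    then have "card (V - U) = card V - 2 * card (base_part M E)"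
      using G'(1) by (simp add: card_Diff_subset finite_subset)
    have "(m + 2) div 3 = m div 3" using True by presburger
    then have "(\<Sum>v\<in>V. m div 3 + (if v \<in> U then 0 else 1)) \<le> (\<Sum>v\<in>V. ?c v)"
      using corona_cycle_copy_cost[OF M m] True unfolding U_def by (intro sum_mono) auto
    moreover have "(\<Sum>v\<in>V. m div 3 + (if v \<in> U then 0 else 1)) = card V * (m div 3) + card (V - U)"
      using G'(1) by (simp add: sum.distrib sum.If_cases Diff_eq)
    moreover have "card (base_part M E) \<le> matching_number E"
      using G'(2) B by (rule card_le_matching_number)
    moreover have "2 * matching_number E \<le> card V" by (rule double_matching_number_le_card[OF G])
    ultimately show ?thesis using total True \<open>card (V - U) = _\<close> unfolding corona_cycle_value_def by simp
  next
    case False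
    have "card V * ((m + 2) div 3) \<le> (\<Sum>v\<in>V. ?c v)"
      using sum_mono[of V "\<lambda>_. (m + 2) div 3" ?c] corona_cycle_copy_cost(1)[OF M m] by simp
    with total False show ?thesis unfolding corona_cycle_value_def by simp
  qed
qed

theorem theorem2p5:
  fixes V :: "'a set" and E :: "'a set set" and m :: nat
  assumes "simple_graph V E" and "m \<ge> 3"
  shows "saturation_number (corona_edges V E (cycle_vertices m) (cycle_edges m)) =
    (if m mod 3 = 0
     then card V * saturation_number (cycle_edges m) + matching_number E
          + (card V - 2 * matching_number E)
     else card V * saturation_number (cycle_edges m))"
proof -
  note G = simple_graphD[OF assms(1)] and H = simple_graphD[OF simple_graph_cycle[OF assms(2)]]
  obtain M where "maximal_matching (corona_edges V E (cycle_vertices m) (cycle_edges m)) M"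
    "card M \<le> corona_cycle_value (card V) (matching_number E) m"
    using corona_cycle_maximal_matching_card_le[OF assms] .
  then have "saturation_number (corona_edges V E (cycle_vertices m) (cycle_edges m)) =
      corona_cycle_value (card V) (matching_number E) m"
    using finite_corona_edges[OF G(1,2) H(1,2)] corona_cycle_maximal_matching_card_ge[OF assms]
    by (intro saturation_number_eqI)
  moreover have "m mod 3 = 0 \<Longrightarrow> (m + 2) div 3 = m div 3" by presburger
  ultimately show ?thesis using cycle_saturation_number[OF assms(2)]
    unfolding corona_cycle_value_def by auto
qed

end
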